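(* Let $\alpha=[0;a_1,a_2,\ldots]\in\mathbf{Bad}$ be such that its continued fraction expansion begins in infinitely many palindromes, i.e. there are infinitely many $n$ such that the word $a_1a_2\ldots a_n$ is a palindrome. Let $\beta$ be any real number equal to $\alpha$ up to a rational homography. Then $\inf_{q\ge1}q\cdot\Vert q\alpha\Vert\cdot\Vert q\beta\Vert=0$ and, moreover, $$\liminf_{q\to+\infty}q^2\cdot\Vert q\alpha\Vert\cdot\Vert q\beta\Vert<+\infty.$$
   Context: For a real number $y$, $\Vert y\Vert$ denotes the distance from $y$ to the nearest integer. $\mathbf{Bad}=\{\alpha\in\mathbb{R} : \inf_{q\ge1} q\Vert q\alpha\Vert>0\}$ (equivalently, real numbers with bounded partial quotients). A finite word $w_1\ldots w_n$ is a palindrome if $w_i=w_{n+1-i}$ for all $i$. A real number $\beta$ is equal to $\alpha$ up to a rational homography if $\beta=(a\alpha+b)/(c\alpha+d)$ for some integers $a,b,c,d$ with $ad-bc\neq0$. *)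

theory Defs
  imports Complex_Main "HOL-Library.Extended_Real" "HOL-Library.Liminf_Limsup"
begin

definition dist_int :: "real \<Rightarrow> real" where
  "dist_int y = \<bar>y - of_int (round y)\<bar>"

definition Bad :: "real set" where
  "Bad = {x. (INF q\<in>{1::nat..}. real q * dist_int (real q * x)) > 0}"

fun cf_rem :: "real \<Rightarrow> nat \<Rightarrow> real" where
  "cf_rem x 0 = frac x"
| "cf_rem x (Suc n) = frac (1 / cf_rem x n)"

definition cf_pq :: "real \<Rightarrow> nat \<Rightarrow> int" where
  "cf_pq x n = (if n = 0 then \<lfloor>x\<rfloor> else \<lfloor>1 / cf_rem x (n - 1)\<rfloor>)"

definition palindrome_prefix :: "(nat \<Rightarrow> 'a) \<Rightarrow> nat \<Rightarrow> bool" where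
  "palindrome_prefix w n = (\<forall>i\<in>{1..n}. w i = w (n + 1 - i))"

definition rational_homography_equiv :: "real \<Rightarrow> real \<Rightarrow> bool" where
  "rational_homography_equiv \<beta> \<alpha> =
     (\<exists>a b c d :: int. a * d - b * c \<noteq> 0 \<and>
        \<beta> = (of_int a * \<alpha> + of_int b) / (of_int c * \<alpha> + of_int d))"

end

theory Submission
  imports Defs
begin

text \<open>Write p_k / q_k for the convergents of alpha = [0; a_1, a_2, ...]. The product of the
  matrices [[a_i, 1], [1, 0]] over i = 1..n is [[q_n, q_(n-1)], [p_n, p_(n-1)]], and its transpose
  is the product taken in reverse order; so if a_1 ... a_n is a palindrome this matrix is symmetric
  and p_n = q_(n-1). For beta = (A alpha + B) / (C alpha + D) put q = C q_(n-1) + D q_n. Then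
  q alpha is within O(1/q_n) of C p_(n-1) + D p_n, and since p_n = q_(n-1) we have
  q = q_n (C alpha + D) + O(1/q_n), so q beta is within O(1/q_n) of A p_n + B q_n. As q is of
  the order of q_n, q^2 ||q alpha|| ||q beta|| stays bounded along infinitely many q, which gives
  both claims. The hypothesis alpha \<in> Bad is only used to know that alpha is irrational.\<close>

datatype mat2 = Mat2 int int int int

instantiation mat2 :: monoid_mult
begin

definition one_mat2 :: mat2 where
  "1 = Mat2 1 0 0 1"

fun times_mat2 :: "mat2 \<Rightarrow> mat2 \<Rightarrow> mat2" where
  "Mat2 a b c d * Mat2 e f g h = Mat2 (a * e + b * g) (a * f + b * h) (c * e + d * g) (c * f + d * h)"

instance
proof
  fix X Y Z :: mat2
  show "X * Y * Z = X * (Y * Z)"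
    by (cases X; cases Y; cases Z) (simp add: algebra_simps)
  show "1 * X = X" "X * 1 = X"
    by (cases X; simp add: one_mat2_def)+
qed

end

fun mat2_transpose :: "mat2 \<Rightarrow> mat2" where
  "mat2_transpose (Mat2 a b c d) = Mat2 a c b d"

lemma mat2_transpose_mult: "mat2_transpose (X * Y) = mat2_transpose Y * mat2_transpose X"
  by (cases X; cases Y) (simp add: algebra_simps)

lemma mat2_transpose_one: "mat2_transpose 1 = 1"
  by (simp add: one_mat2_def)

lemma mat2_transpose_prod_list:
  "mat2_transpose (prod_list Xs) = prod_list (rev (map mat2_transpose Xs))"
  by (induction Xs) (simp_all add: mat2_transpose_one mat2_transpose_mult)

text \<open>conv_denom a (Suc k) and conv_numer a (Suc k) are q_k and p_k for [0; a_1, a_2, ...];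
  index 0 holds q_(-1) = 0 and p_(-1) = 1.\<close>

fun conv_denom :: "(nat \<Rightarrow> int) \<Rightarrow> nat \<Rightarrow> int" where
  "conv_denom a 0 = 0"
| "conv_denom a (Suc 0) = 1"
| "conv_denom a (Suc (Suc k)) = a (Suc k) * conv_denom a (Suc k) + conv_denom a k"

fun conv_numer :: "(nat \<Rightarrow> int) \<Rightarrow> nat \<Rightarrow> int" where
  "conv_numer a 0 = 1"
| "conv_numer a (Suc 0) = 0"
| "conv_numer a (Suc (Suc k)) = a (Suc k) * conv_numer a (Suc k) + conv_numer a k"

definition cf_matrix :: "int \<Rightarrow> mat2" where
  "cf_matrix x = Mat2 x 1 1 0"

lemma mat2_transpose_cf_matrix: "mat2_transpose \<circ> cf_matrix = cf_matrix"
  by (simp add: cf_matrix_def fun_eq_iff)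

lemma prod_list_cf_matrix:
  "prod_list (map (cf_matrix \<circ> a) [1..<Suc n]) =
     Mat2 (conv_denom a (Suc n)) (conv_denom a n) (conv_numer a (Suc n)) (conv_numer a n)"
  by (induction n) (simp_all add: one_mat2_def cf_matrix_def algebra_simps)

lemma palindrome_prefix_rev:
  assumes "palindrome_prefix a n"
  shows "rev (map a [1..<Suc n]) = map a [1..<Suc n]"
proof (rule nth_equalityI)
  fix i assume "i < length (rev (map a [1..<Suc n]))"
  then have i: "i < n" by (simp del: upt_Suc)
  then have "Suc i \<in> {1..n}" by simp
  then have "a (Suc i) = a (n + 1 - Suc i)"
    using assms unfolding palindrome_prefix_def by blast
  with i show "rev (map a [1..<Suc n]) ! i = map a [1..<Suc n] ! i"
    by (simp add: rev_nth Suc_diff_Suc del: upt_Suc)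
qed (simp del: upt_Suc)

lemma palindrome_prefix_conv_numer:
  assumes "palindrome_prefix a n"
  shows "conv_numer a (Suc n) = conv_denom a n"
proof -
  let ?M = "prod_list (map (cf_matrix \<circ> a) [1..<Suc n])"
  have "mat2_transpose ?M = prod_list (map cf_matrix (rev (map a [1..<Suc n])))"
    by (simp only: mat2_transpose_prod_list rev_map map_map o_assoc mat2_transpose_cf_matrix)
  also have "\<dots> = ?M"
    by (simp only: palindrome_prefix_rev[OF assms] map_map)
  finally have "mat2_transpose ?M = ?M" .
  then show ?thesis
    unfolding prod_list_cf_matrix mat2_transpose.simps mat2.inject by (elim conjE) (rule sym)
qed

lemma conv_denom_nonneg_le_Suc:
  assumes "\<And>k. 1 \<le> a (Suc k)"
  shows "0 \<le> conv_denom a k \<and> conv_denom a k \<le> conv_denom a (Suc k)"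
proof (induction k)
  case (Suc k)
  then have "conv_denom a (Suc k) \<le> a (Suc k) * conv_denom a (Suc k)"
    using assms[of k] by (simp add: mult_le_cancel_right1)
  with Suc show ?case by simp
qed simp

lemma conv_denom_Suc_ge:
  assumes "\<And>k. 1 \<le> a (Suc k)"
  shows "1 \<le> conv_denom a (Suc k)" and "int k \<le> conv_denom a (Suc k)"
proof -
  have mono: "conv_denom a m \<le> conv_denom a m'" if "m \<le> m'" for m m'
    using lift_Suc_mono_le[of "conv_denom a", OF _ that] conv_denom_nonneg_le_Suc[of a, OF assms] by blast
  show pos: "1 \<le> conv_denom a (Suc k)" for k
    using mono[of 1 "Suc k"] by simp
  show "int k \<le> conv_denom a (Suc k)"
  proof (induction k)
    case (Suc k)
    have "conv_denom a (Suc k) \<le> a (Suc k) * conv_denom a (Suc k)"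
      using assms[of k] pos[of k] by (simp add: mult_le_cancel_right1)
    moreover have "int k + 1 \<le> conv_denom a (Suc k) + conv_denom a k"
      using Suc pos[of k] pos[of "k - 1"] by (cases k) auto
    ultimately show ?case
      by simp
  qed simp
qed

lemma frac_irrational:
  fixes x :: real
  assumes "x \<notin> \<rat>"
  shows "frac x \<notin> \<rat>" and "0 < frac x"
proof -
  show "frac x \<notin> \<rat>"
    using assms Rats_add[of "frac x" "of_int \<lfloor>x\<rfloor>"] by (auto simp: frac_def)
  show "0 < frac x"
    using assms frac_ge_0[of x] Ints_subset_Rats by auto
qed

lemma cf_rem_irrational:
  assumes "x \<notin> \<rat>"
  shows "cf_rem x k \<notin> \<rat> \<and> 0 < cf_rem x k"
proof (induction k)
  case 0
  show ?case using frac_irrational[OF assms] by simp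
next
  case (Suc k)
  then have "1 / cf_rem x k \<notin> \<rat>"
    using Rats_divide[OF Rats_1, of "1 / cf_rem x k"] by auto
  then show ?case using frac_irrational by simp
qed

lemma cf_rem_less_1: "cf_rem x k < 1"
  by (cases k) (simp_all add: frac_lt_1)

lemma cf_pq_Suc_ge_1:
  assumes "x \<notin> \<rat>"
  shows "1 \<le> cf_pq x (Suc k)"
proof -
  have "1 \<le> 1 / cf_rem x k"
    using cf_rem_irrational[OF assms, of k] cf_rem_less_1[of x k] by simp
  then show ?thesis by (simp add: cf_pq_def)
qed

lemma inverse_cf_rem: "1 / cf_rem x k = of_int (cf_pq x (Suc k)) + cf_rem x (Suc k)"
  by (simp add: cf_pq_def frac_def)

lemma dist_int_nonneg: "0 \<le> dist_int y"
  by (simp add: dist_int_def)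

lemma dist_int_le: "dist_int y \<le> \<bar>y - of_int m\<bar>"
  unfolding dist_int_def by (rule round_diff_minimal)

lemma dist_int_abs_mult_le: "dist_int (\<bar>t\<bar> * x) \<le> \<bar>t * x - of_int m\<bar>"
proof (cases "0 \<le> t")
  case False
  have "dist_int (\<bar>t\<bar> * x) \<le> \<bar>\<bar>t\<bar> * x - of_int (- m)\<bar>"
    by (rule dist_int_le)
  with False show ?thesis by simp
qed (simp add: dist_int_le)

locale irrational_in_unit_interval =
  fixes \<alpha> :: real
  assumes irrational: "\<alpha> \<notin> \<rat>" and pos: "0 < \<alpha>" and less_1: "\<alpha> < 1"
begin

abbreviation "Q \<equiv> conv_denom (cf_pq \<alpha>)"
abbreviation "P \<equiv> conv_numer (cf_pq \<alpha>)"

lemma Q_nonneg: "0 \<le> Q k" and Q_mono: "Q k \<le> Q (Suc k)"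
  and Q_Suc_ge_1: "1 \<le> Q (Suc k)" and Q_Suc_ge: "int k \<le> Q (Suc k)"
  using conv_denom_nonneg_le_Suc[of "cf_pq \<alpha>" k] conv_denom_Suc_ge[of "cf_pq \<alpha>" k]
    cf_pq_Suc_ge_1[OF irrational] by blast+

definition approx_error :: "nat \<Rightarrow> real" where
  "approx_error k = of_int (Q k) * \<alpha> - of_int (P k)"

lemma approx_error_Suc: "approx_error (Suc k) = - cf_rem \<alpha> k * approx_error k"
proof (induction k)
  case 0
  have "cf_rem \<alpha> 0 = \<alpha>" using pos less_1 by (simp add: frac_eq)
  then show ?case by (simp add: approx_error_def)
next
  case (Suc k)
  have r: "0 < cf_rem \<alpha> k" using cf_rem_irrational[OF irrational] by blast
  have "approx_error (Suc (Suc k)) = of_int (cf_pq \<alpha> (Suc k)) * approx_error (Suc k) + approx_error k"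
    by (simp add: approx_error_def algebra_simps)
  also have "approx_error k = - approx_error (Suc k) / cf_rem \<alpha> k"
    using Suc r by (simp add: field_simps)
  also have "of_int (cf_pq \<alpha> (Suc k)) * approx_error (Suc k) + - approx_error (Suc k) / cf_rem \<alpha> k
      = (of_int (cf_pq \<alpha> (Suc k)) - 1 / cf_rem \<alpha> k) * approx_error (Suc k)"
    by (simp add: field_simps)
  also have "of_int (cf_pq \<alpha> (Suc k)) - 1 / cf_rem \<alpha> k = - cf_rem \<alpha> (Suc k)"
    using inverse_cf_rem[of \<alpha> k] by linarith
  finally show ?case .
qed

lemma abs_approx_error_eq:
  "\<bar>approx_error k\<bar> * (of_int (Q (Suc k)) + of_int (Q k) * cf_rem \<alpha> k) = 1"
proof (induction k)
  case 0
  then show ?case by (simp add: approx_error_def)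
next
  case (Suc k)
  have r: "0 < cf_rem \<alpha> k" using cf_rem_irrational[OF irrational] by blast
  have "of_int (Q (Suc (Suc k))) + of_int (Q (Suc k)) * cf_rem \<alpha> (Suc k)
      = of_int (Q (Suc k)) * (of_int (cf_pq \<alpha> (Suc k)) + cf_rem \<alpha> (Suc k)) + of_int (Q k)"
    by (simp add: algebra_simps)
  also have "\<dots> = of_int (Q (Suc k)) * (1 / cf_rem \<alpha> k) + of_int (Q k)"
    by (simp only: inverse_cf_rem)
  also have "\<dots> = (of_int (Q (Suc k)) + of_int (Q k) * cf_rem \<alpha> k) / cf_rem \<alpha> k"
    using r by (simp add: field_simps)
  finally show ?case
    using Suc r by (simp add: approx_error_Suc abs_mult)
qed

lemma abs_approx_error_le: "\<bar>approx_error k\<bar> \<le> 1 / of_int (Q (Suc k))"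
proof -
  have "0 \<le> of_int (Q k) * cf_rem \<alpha> k"
    using Q_nonneg[of k] cf_rem_irrational[OF irrational, of k] by simp
  then have "\<bar>approx_error k\<bar> * of_int (Q (Suc k))
      \<le> \<bar>approx_error k\<bar> * (of_int (Q (Suc k)) + of_int (Q k) * cf_rem \<alpha> k)"
    by (intro mult_left_mono) auto
  then have "\<bar>approx_error k\<bar> * of_int (Q (Suc k)) \<le> 1"
    using abs_approx_error_eq[of k] by simp
  then show ?thesis
    using Q_Suc_ge_1[of k] by (simp add: field_simps)
qed

lemma abs_approx_error_Suc_le: "\<bar>approx_error (Suc k)\<bar> \<le> 1 / of_int (Q (Suc k))"
proof -
  have "(1::real) \<le> of_int (Q (Suc k))" "of_int (Q (Suc k)) \<le> (of_int (Q (Suc (Suc k))) :: real)"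
    using Q_Suc_ge_1[of k] Q_mono[of "Suc k"] by (simp_all only: of_int_le_iff of_int_1_le_iff)
  then have "1 / of_int (Q (Suc (Suc k))) \<le> (1 / of_int (Q (Suc k)) :: real)"
    by (intro divide_left_mono) auto
  then show ?thesis
    using abs_approx_error_le[of "Suc k"] by linarith
qed

lemma combination_approx:
  "\<bar>of_int (C * Q n + D * Q (Suc n)) * \<alpha> - of_int (C * P n + D * P (Suc n))\<bar>
     \<le> (\<bar>of_int C\<bar> + \<bar>of_int D\<bar>) / of_int (Q (Suc n))"
proof -
  have "of_int (C * Q n + D * Q (Suc n)) * \<alpha> - of_int (C * P n + D * P (Suc n))
      = of_int C * approx_error n + of_int D * approx_error (Suc n)"
    by (simp add: approx_error_def algebra_simps)
  also have "\<bar>\<dots>\<bar> \<le> \<bar>of_int C\<bar> * \<bar>approx_error n\<bar> + \<bar>of_int D\<bar> * \<bar>approx_error (Suc n)\<bar>"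
    unfolding abs_mult[symmetric] by (rule abs_triangle_ineq)
  also have "\<dots> \<le> \<bar>of_int C\<bar> * (1 / of_int (Q (Suc n))) + \<bar>of_int D\<bar> * (1 / of_int (Q (Suc n)))"
    by (intro add_mono mult_left_mono abs_approx_error_le abs_approx_error_Suc_le) auto
  finally show ?thesis
    by (simp add: add_divide_distrib)
qed

lemma abs_combination_le:
  "\<bar>real_of_int (C * Q n + D * Q (Suc n))\<bar> \<le> (\<bar>of_int C\<bar> + \<bar>of_int D\<bar>) * of_int (Q (Suc n))"
proof -
  have "\<bar>real_of_int (C * Q n + D * Q (Suc n))\<bar> \<le> \<bar>of_int C\<bar> * of_int (Q n) + \<bar>of_int D\<bar> * of_int (Q (Suc n))"
    using abs_triangle_ineq[of "of_int (C * Q n)" "of_int (D * Q (Suc n)) :: real"]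
      Q_nonneg[of n] Q_nonneg[of "Suc n"] by (simp add: abs_mult)
  also have "\<dots> \<le> \<bar>of_int C\<bar> * of_int (Q (Suc n)) + \<bar>of_int D\<bar> * of_int (Q (Suc n))"
    using Q_mono[of n] by (intro add_mono mult_left_mono) auto
  finally show ?thesis
    by (simp add: algebra_simps)
qed

lemma palindrome_combination_eq:
  assumes "palindrome_prefix (cf_pq \<alpha>) n"
  shows "of_int (C * Q n + D * Q (Suc n))
           = of_int (Q (Suc n)) * (of_int C * \<alpha> + of_int D) - of_int C * approx_error (Suc n)"
  using palindrome_prefix_conv_numer[OF assms] by (simp add: approx_error_def algebra_simps)

lemma palindrome_abs_combination_ge:
  assumes "palindrome_prefix (cf_pq \<alpha>) n"
  shows "of_int (Q (Suc n)) * \<bar>of_int C * \<alpha> + of_int D\<bar> - \<bar>of_int C\<bar>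
           \<le> \<bar>real_of_int (C * Q n + D * Q (Suc n))\<bar>"
proof -
  have "1 / of_int (Q (Suc n)) \<le> (1::real)"
    using Q_Suc_ge_1[of n] by simp
  then have "\<bar>approx_error (Suc n)\<bar> \<le> 1"
    using abs_approx_error_Suc_le[of n] by linarith
  then have "\<bar>of_int C * approx_error (Suc n)\<bar> \<le> \<bar>of_int C\<bar>"
    by (simp add: abs_mult mult_left_le)
  moreover have "\<bar>of_int (Q (Suc n)) * (of_int C * \<alpha> + of_int D)\<bar>
      = of_int (Q (Suc n)) * \<bar>of_int C * \<alpha> + of_int D\<bar>"
    using Q_Suc_ge_1[of n] by (simp add: abs_mult)
  ultimately show ?thesis
    unfolding palindrome_combination_eq[OF assms] by linarith
qed

lemma palindrome_combination_approx_homography: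
  assumes "palindrome_prefix (cf_pq \<alpha>) n"
    and "of_int C * \<alpha> + of_int D \<noteq> 0"
    and "\<beta> = (of_int A * \<alpha> + of_int B) / (of_int C * \<alpha> + of_int D)"
  shows "\<bar>of_int (C * Q n + D * Q (Suc n)) * \<beta> - of_int (A * P (Suc n) + B * Q (Suc n))\<bar>
           \<le> (\<bar>of_int A\<bar> + \<bar>of_int C\<bar> * \<bar>\<beta>\<bar>) / of_int (Q (Suc n))"
proof -
  have "of_int (C * Q n + D * Q (Suc n)) * \<beta>
      = of_int (Q (Suc n)) * ((of_int C * \<alpha> + of_int D) * \<beta>) - of_int C * approx_error (Suc n) * \<beta>"
    unfolding palindrome_combination_eq[OF assms(1)] by (simp add: algebra_simps)
  also have "(of_int C * \<alpha> + of_int D) * \<beta> = of_int A * \<alpha> + of_int B"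
    using assms(2,3) by simp
  finally have "of_int (C * Q n + D * Q (Suc n)) * \<beta> - of_int (A * P (Suc n) + B * Q (Suc n))
      = (of_int A - of_int C * \<beta>) * approx_error (Suc n)"
    by (simp add: approx_error_def algebra_simps)
  then have "\<bar>of_int (C * Q n + D * Q (Suc n)) * \<beta> - of_int (A * P (Suc n) + B * Q (Suc n))\<bar>
      = \<bar>of_int A - of_int C * \<beta>\<bar> * \<bar>approx_error (Suc n)\<bar>"
    by (simp add: abs_mult)
  also have "\<dots> \<le> (\<bar>of_int A\<bar> + \<bar>of_int C\<bar> * \<bar>\<beta>\<bar>) * (1 / of_int (Q (Suc n)))"
    by (intro mult_mono abs_approx_error_Suc_le)
      (auto simp: abs_mult intro: order.trans[OF abs_triangle_ineq4])
  finally show ?thesis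
    by simp
qed

lemma palindrome_homography_product_le:
  assumes "palindrome_prefix (cf_pq \<alpha>) n"
    and "of_int C * \<alpha> + of_int D \<noteq> 0"
    and "\<beta> = (of_int A * \<alpha> + of_int B) / (of_int C * \<alpha> + of_int D)"
  defines "N \<equiv> nat \<bar>C * Q n + D * Q (Suc n)\<bar>"
  shows "real N ^ 2 * dist_int (real N * \<alpha>) * dist_int (real N * \<beta>)
           \<le> (\<bar>of_int C\<bar> + \<bar>of_int D\<bar>) ^ 3 * (\<bar>of_int A\<bar> + \<bar>of_int C\<bar> * \<bar>\<beta>\<bar>)"
proof -
  define X where "X = \<bar>real_of_int C\<bar> + \<bar>of_int D\<bar>"
  define Y where "Y = \<bar>real_of_int A\<bar> + \<bar>of_int C\<bar> * \<bar>\<beta>\<bar>"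
  define Z where "Z = real_of_int (Q (Suc n))"
  have N: "real N = \<bar>of_int (C * Q n + D * Q (Suc n))\<bar>"
    by (simp add: N_def)
  have Z: "1 \<le> Z"
    using Q_Suc_ge_1[of n] by (simp add: Z_def)
  have "dist_int (real N * \<alpha>) \<le> X / Z"
    using dist_int_abs_mult_le combination_approx unfolding N X_def Z_def by (rule order.trans)
  moreover have "dist_int (real N * \<beta>) \<le> Y / Z"
    using dist_int_abs_mult_le palindrome_combination_approx_homography[OF assms(1-3)]
    unfolding N Y_def Z_def by (rule order.trans)
  moreover have "real N \<le> X * Z"
    using abs_combination_le unfolding N X_def Z_def .
  ultimately have "real N ^ 2 * (dist_int (real N * \<alpha>) * dist_int (real N * \<beta>))
      \<le> (X * Z) ^ 2 * (X / Z * (Y / Z))"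
    using Z by (intro mult_mono power_mono) (auto simp: dist_int_nonneg X_def Y_def)
  also have "\<dots> = X ^ 3 * Y"
    using Z by (simp add: field_simps power2_eq_square power3_eq_cube)
  finally show ?thesis
    by (simp add: X_def Y_def mult.assoc)
qed

lemma frequently_homography_product_le:
  assumes "infinite {n. palindrome_prefix (cf_pq \<alpha>) n}"
    and "of_int C * \<alpha> + of_int D \<noteq> 0"
    and "\<beta> = (of_int A * \<alpha> + of_int B) / (of_int C * \<alpha> + of_int D)"
  shows "frequently (\<lambda>q. real q ^ 2 * dist_int (real q * \<alpha>) * dist_int (real q * \<beta>)
           \<le> (\<bar>of_int C\<bar> + \<bar>of_int D\<bar>) ^ 3 * (\<bar>of_int A\<bar> + \<bar>of_int C\<bar> * \<bar>\<beta>\<bar>)) sequentially"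
proof -
  let ?f = "\<lambda>q::nat. real q ^ 2 * dist_int (real q * \<alpha>) * dist_int (real q * \<beta>)"
  let ?K = "(\<bar>of_int C\<bar> + \<bar>of_int D\<bar>) ^ 3 * (\<bar>of_int A\<bar> + \<bar>of_int C\<bar> * \<bar>\<beta>\<bar>)"
  have "\<exists>N\<ge>M. ?f N \<le> ?K" for M
  proof -
    define c where "c = \<bar>of_int C * \<alpha> + of_int D\<bar>"
    have c: "0 < c"
      using assms(2) by (simp add: c_def)
    obtain n0 :: nat where n0: "(real M + \<bar>of_int C\<bar>) / c \<le> real n0"
      using real_arch_simple by blast
    obtain n where n: "n0 \<le> n" "palindrome_prefix (cf_pq \<alpha>) n"
      using assms(1) unfolding infinite_nat_iff_unbounded_le by blast
    define N where "N = nat \<bar>C * Q n + D * Q (Suc n)\<bar>"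
    have "real M + \<bar>of_int C\<bar> \<le> real n0 * c"
      using n0 c by (simp add: field_simps)
    also have "\<dots> \<le> real n * c"
      using n(1) c by (intro mult_right_mono) auto
    also have "\<dots> \<le> of_int (Q (Suc n)) * c"
      using Q_Suc_ge[of n] c by (intro mult_right_mono) auto
    finally have "real M \<le> real N"
      using palindrome_abs_combination_ge[OF n(2), of C D] by (simp add: N_def c_def)
    then have "M \<le> N"
      by simp
    with palindrome_homography_product_le[OF n(2) assms(2,3)] show ?thesis
      unfolding N_def by blast
  qed
  then show ?thesis
    unfolding frequently_sequentially by blast
qed

end

lemma Bad_irrational:
  assumes "x \<in> Bad"
  shows "x \<notin> \<rat>"
proof
  assume "x \<in> \<rat>"
  then obtain u v :: int where v: "0 < v" and uv: "x = of_int u / of_int v"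
    by (rule Rats_cases')
  have "bdd_below ((\<lambda>q. real q * dist_int (real q * x)) ` {1::nat..})"
    by (rule bdd_belowI[of _ 0]) (auto simp: dist_int_nonneg)
  moreover have "nat v \<in> {1::nat..}"
    using v by simp
  ultimately have "(INF q\<in>{1::nat..}. real q * dist_int (real q * x))
      \<le> real (nat v) * dist_int (real (nat v) * x)"
    by (rule cINF_lower)
  also have "real (nat v) * x = of_int u"
    using v uv by simp
  finally show False
    using assms by (simp add: Bad_def dist_int_def)
qed

lemma homography_denominator_nonzero:
  fixes x :: real
  assumes "x \<notin> \<rat>" and "A * D - B * C \<noteq> 0"
  shows "of_int C * x + of_int D \<noteq> 0"
proof
  assume zero: "of_int C * x + of_int D = 0"
  show False
  proof (cases "C = 0")
    case True
    with zero assms(2) show False by simp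
  next
    case False
    with zero have "x = - of_int D / of_int C"
      by (simp add: field_simps)
    with assms(1) show False by simp
  qed
qed

lemma liminf_less_infinity_if_frequently_le:
  assumes "frequently (\<lambda>n. f n \<le> K) sequentially"
  shows "liminf (\<lambda>n. ereal (f n)) < \<infinity>"
proof -
  have "liminf (\<lambda>n. ereal (f n)) \<le> ereal K"
  proof (rule ccontr)
    assume "\<not> liminf (\<lambda>n. ereal (f n)) \<le> ereal K"
    then have "eventually (\<lambda>n. ereal K < ereal (f n)) sequentially"
      by (intro less_LiminfD) simp
    with assms show False
      by (simp add: frequently_def eventually_mono)
  qed
  also have "ereal K < \<infinity>"
    by simp
  finally show ?thesis .
qed

lemma INF_eq_0_if_frequently_mult_le:
  fixes f :: "nat \<Rightarrow> real"
  assumes nonneg: "\<And>n. 0 \<le> f n"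
    and bounded: "frequently (\<lambda>n. real n * f n \<le> K) sequentially"
  shows "(INF n\<in>{1..}. f n) = 0"
proof (rule antisym)
  have bdd: "bdd_below (f ` {1..})"
    using nonneg by (intro bdd_belowI[of _ 0]) auto
  show "(INF n\<in>{1..}. f n) \<le> 0"
  proof (rule field_le_epsilon)
    fix e :: real
    assume e: "0 < e"
    obtain M :: nat where M: "K / e < real M"
      using reals_Archimedean2 by blast
    obtain n where n: "Suc M \<le> n" "real n * f n \<le> K"
      using bounded unfolding frequently_sequentially by blast
    have "K < e * real M"
      using M e by (simp add: divide_less_eq mult.commute)
    also have "\<dots> \<le> e * real n"
      using n(1) e by simp
    finally have "real n * f n < real n * e"
      using n(2) by (simp add: mult.commute)
    then have "f n < e"
      by (simp add: mult_less_cancel_left)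
    moreover have "(INF n\<in>{1..}. f n) \<le> f n"
      using n(1) by (intro cINF_lower[OF bdd]) simp
    ultimately show "(INF n\<in>{1..}. f n) \<le> 0 + e"
      by simp
  qed
  show "0 \<le> (INF n\<in>{1..}. f n)"
    using nonneg by (intro cINF_greatest) auto
qed

theorem theorem6:
  fixes \<alpha> \<beta> :: real
  assumes "0 < \<alpha>" and "\<alpha> < 1"
    and "\<alpha> \<in> Bad"
    and "infinite {n. palindrome_prefix (cf_pq \<alpha>) n}"
    and "rational_homography_equiv \<beta> \<alpha>"
  shows "(INF q\<in>{1::nat..}. real q * dist_int (real q * \<alpha>) * dist_int (real q * \<beta>)) = 0 \<and>
         liminf (\<lambda>q::nat. ereal (real q ^ 2 * dist_int (real q * \<alpha>) * dist_int (real q * \<beta>)))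
           < \<infinity>"
proof -
  have irrational: "\<alpha> \<notin> \<rat>"
    using assms(3) by (rule Bad_irrational)
  interpret irrational_in_unit_interval \<alpha>
    using irrational assms(1,2) by unfold_locales
  obtain A B C D :: int where det: "A * D - B * C \<noteq> 0"
    and \<beta>: "\<beta> = (of_int A * \<alpha> + of_int B) / (of_int C * \<alpha> + of_int D)"
    using assms(5) unfolding rational_homography_equiv_def by blast
  note bounded = frequently_homography_product_le[OF assms(4)
      homography_denominator_nonzero[OF irrational det] \<beta>]
  then have bounded_mult: "frequently (\<lambda>q. real q * (real q * dist_int (real q * \<alpha>) * dist_int (real q * \<beta>))
      \<le> (\<bar>of_int C\<bar> + \<bar>of_int D\<bar>) ^ 3 * (\<bar>of_int A\<bar> + \<bar>of_int C\<bar> * \<bar>\<beta>\<bar>)) sequentially"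
    by (simp only: power2_eq_square mult.assoc)
  have "0 \<le> real q * dist_int (real q * \<alpha>) * dist_int (real q * \<beta>)" for q
    by (simp add: dist_int_nonneg)
  then have "(INF q\<in>{1::nat..}. real q * dist_int (real q * \<alpha>) * dist_int (real q * \<beta>)) = 0"
    using bounded_mult by (rule INF_eq_0_if_frequently_mult_le)
  then show ?thesis
    using liminf_less_infinity_if_frequently_le[OF bounded] by (rule conjI)
qed

end
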